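(* Let $G_1=(V_1,E_1)$ and $G_2=(V_2,E_2)$ be word-representable graphs with disjoint vertex sets, $\mathcal{R}(G_1)=k_1$, $\mathcal{R}(G_2)=k_2$, and let $x\in V_1$, $y\in V_2$, $k=\max(k_1,k_2)$. Let $G'$ be the graph with vertex set $V_1\cup V_2$ and edge set $E_1\cup E_2\cup\{(x,y)\}$, and let $G''$ be the graph obtained from $G_1$ and $G_2$ by identifying $x$ and $y$ into a single vertex $z$. Then: (1) if $|V_1|=|V_2|=1$, then $G'$ and $G''$ are complete graphs, $k_1=k_2=1$, and $\mathcal{R}(G')=\mathcal{R}(G'')=1$; (2) if $\min(|V_1|,|V_2|)=1$ and $\max(|V_1|,|V_2|)>1$, then $\mathcal{R}(G'')=k$ and $\mathcal{R}(G')=\max(k,2)$; (3) if $\min(|V_1|,|V_2|)>1$, then $\mathcal{R}(G')=\mathcal{R}(G'')=\max(k,2)$.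
   Context: All graphs are finite and simple. For a word $w$ and distinct letters $x,y$ occurring in $w$, $x$ and $y$ alternate in $w$ if deleting all letters other than copies of $x$ and $y$ yields a word of the form $xyxy\cdots$ or $yxyx\cdots$ (of even or odd length). A graph $G=(V,E)$ is word-representable if there is a word $w$ over $V$ (each vertex occurring in $w$) such that for all distinct $x,y\in V$, $x$ and $y$ alternate in $w$ iff $(x,y)\in E$. A word is $k$-uniform if each letter occurs exactly $k$ times; $G$ is $k$-word-representable if some $k$-uniform word represents it; the representation number $\mathcal{R}(G)$ is the least such $k$. *)

theory Defs
  imports Main
begin

definition simple_graph :: "'a set \<Rightarrow> ('a \<times> 'a) set \<Rightarrow> bool" where
  "simple_graph V E \<longleftrightarrow> finite V \<and> E \<subseteq> V \<times> V \<and> sym E \<and> irrefl E"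

definition complete_graph :: "'a set \<Rightarrow> ('a \<times> 'a) set \<Rightarrow> bool" where
  "complete_graph V E \<longleftrightarrow> (\<forall>u\<in>V. \<forall>v\<in>V. u \<noteq> v \<longrightarrow> (u, v) \<in> E)"

definition alternate :: "'a list \<Rightarrow> 'a \<Rightarrow> 'a \<Rightarrow> bool" where
  "alternate w x y \<longleftrightarrow>
     (let u = filter (\<lambda>c. c = x \<or> c = y) w in
       u = map (\<lambda>i. if even i then x else y) [0..<length u] \<or>
       u = map (\<lambda>i. if even i then y else x) [0..<length u])"

definition represents :: "'a set \<Rightarrow> ('a \<times> 'a) set \<Rightarrow> 'a list \<Rightarrow> bool" where
  "represents V E w \<longleftrightarrow> set w = V \<and>
     (\<forall>x\<in>V. \<forall>y\<in>V. x \<noteq> y \<longrightarrow> (alternate w x y \<longleftrightarrow> (x, y) \<in> E))"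

definition uniform_word :: "nat \<Rightarrow> 'a list \<Rightarrow> bool" where
  "uniform_word k w \<longleftrightarrow> (\<forall>a\<in>set w. count_list w a = k)"

definition word_representable :: "'a set \<Rightarrow> ('a \<times> 'a) set \<Rightarrow> bool" where
  "word_representable V E \<longleftrightarrow> (\<exists>w. represents V E w)"

definition k_word_representable :: "nat \<Rightarrow> 'a set \<Rightarrow> ('a \<times> 'a) set \<Rightarrow> bool" where
  "k_word_representable k V E \<longleftrightarrow> (\<exists>w. uniform_word k w \<and> represents V E w)"

definition rep_num :: "'a set \<Rightarrow> ('a \<times> 'a) set \<Rightarrow> nat" where
  "rep_num V E = (LEAST k. k_word_representable k V E)"

definition bridge_V :: "'a set \<Rightarrow> 'a set \<Rightarrow> 'a set" where
  "bridge_V V1 V2 = V1 \<union> V2"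
definition bridge_E :: "('a \<times> 'a) set \<Rightarrow> ('a \<times> 'a) set \<Rightarrow> 'a \<Rightarrow> 'a \<Rightarrow> ('a \<times> 'a) set" where
  "bridge_E E1 E2 x y = E1 \<union> E2 \<union> {(x, y), (y, x)}"

definition merge_vx :: "'a \<Rightarrow> 'a \<Rightarrow> 'a \<Rightarrow> 'a \<Rightarrow> 'a" where
  "merge_vx x y z v = (if v = x \<or> v = y then z else v)"
definition ident_V :: "'a set \<Rightarrow> 'a set \<Rightarrow> 'a \<Rightarrow> 'a \<Rightarrow> 'a \<Rightarrow> 'a set" where
  "ident_V V1 V2 x y z = (V1 - {x}) \<union> (V2 - {y}) \<union> {z}"
definition ident_E :: "('a \<times> 'a) set \<Rightarrow> ('a \<times> 'a) set \<Rightarrow> 'a \<Rightarrow> 'a \<Rightarrow> 'a \<Rightarrow> ('a \<times> 'a) set" where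
  "ident_E E1 E2 x y z = (\<lambda>(a, b). (merge_vx x y z a, merge_vx x y z b)) ` (E1 \<union> E2)"

end

theory Submission
  imports Defs
begin

text \<open>Restricting a uniform representant to a set of vertices represents the induced subgraph,
  so both G' and G'' need uniformity at least k = max k1 k2, and at least 2 unless they are
  complete, since two letters occurring once each always alternate. Conversely, a representant
  can be padded to any larger uniformity by prepending rarest letters, and a uniform one can be
  rotated to start at any vertex v. Two m-uniform words v A1 v A2 \<dots> v Am and v B1 \<dots> v Bm
  over vertex sets meeting only in v are then glued, for m \<ge> 2, into v B1 A1 v A2 B2 \<dots> v Am Bm:
  its restrictions are the two given words, and no letter of the A-blocks alternates with a
  letter of the B-blocks. G'' is one such gluing (at z); G' is two, gluing G1 and
  G2 to the edge on {x, y} at x and at y.\<close>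

section \<open>Alternation\<close>

definition alternating_list :: "'a \<Rightarrow> 'a \<Rightarrow> nat \<Rightarrow> 'a list" where
  "alternating_list a b n = map (\<lambda>i. if even i then a else b) [0..<n]"

lemma alternating_list_0 [simp]: "alternating_list a b 0 = []"
  by (simp add: alternating_list_def)

lemma alternating_list_Suc: "alternating_list a b (Suc n) = a # alternating_list b a n"
  unfolding alternating_list_def by (induction n) auto

lemma successively_alternating_list:
  "a \<noteq> b \<Longrightarrow> successively (\<noteq>) (alternating_list a b n)"
proof (induction n arbitrary: a b)
  case 0 then show ?case by (simp add: alternating_list_def)
next
  case (Suc n) then show ?case
    by (cases n) (auto simp: alternating_list_Suc)
qed

lemma eq_alternating_list:
  assumes "successively (\<noteq>) u" "set u \<subseteq> {a, b}" "u \<noteq> []" "hd u = a"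
  shows "u = alternating_list a b (length u)"
  using assms
proof (induction u arbitrary: a b)
  case Nil then show ?case by simp
next
  case (Cons c u)
  show ?case
  proof (cases u)
    case Nil then show ?thesis using Cons.prems by (simp add: alternating_list_def)
  next
    case (Cons d r)
    with Cons.prems have "d = b" "c = a" "successively (\<noteq>) u" "set u \<subseteq> {b, a}" by auto
    with Cons.IH \<open>u = d # r\<close> have "u = alternating_list b a (length u)" by auto
    then show ?thesis using \<open>c = a\<close> by (simp add: alternating_list_Suc)
  qed
qed

lemma alternate_iff_successively:
  assumes "a \<noteq> b"
  shows "alternate w a b \<longleftrightarrow> successively (\<noteq>) (filter (\<lambda>c. c = a \<or> c = b) w)"
proof -
  let ?u = "filter (\<lambda>c. c = a \<or> c = b) w"
  have "alternate w a b \<longleftrightarrow>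
      ?u = alternating_list a b (length ?u) \<or> ?u = alternating_list b a (length ?u)"
    unfolding alternate_def alternating_list_def Let_def by (rule refl)
  also have "\<dots> \<longleftrightarrow> successively (\<noteq>) ?u"
  proof
    assume "?u = alternating_list a b (length ?u) \<or> ?u = alternating_list b a (length ?u)"
    then show "successively (\<noteq>) ?u"
      by (metis (no_types) successively_alternating_list assms)
  next
    assume succ: "successively (\<noteq>) ?u"
    show "?u = alternating_list a b (length ?u) \<or> ?u = alternating_list b a (length ?u)"
    proof (cases "?u = []")
      case True then show ?thesis by (simp add: alternating_list_def)
    next
      case False
      then have "hd ?u = a \<or> hd ?u = b" using hd_in_set[of ?u] by auto
      moreover have "set ?u \<subseteq> {a, b}" "set ?u \<subseteq> {b, a}" by auto
      ultimately show ?thesis using eq_alternating_list[OF succ] False by blast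
    qed
  qed
  finally show ?thesis .
qed

lemma alternate_commute: "alternate w a b \<longleftrightarrow> alternate w b a"
proof (cases "a = b")
  case False
  have "filter (\<lambda>c. c = a \<or> c = b) w = filter (\<lambda>c. c = b \<or> c = a) w"
    by (rule filter_cong) auto
  then show ?thesis using alternate_iff_successively[of a b] alternate_iff_successively[of b a] False
    by simp
qed simp

lemma alternate_filter:
  assumes "P a" "P b"
  shows "alternate (filter P w) a b \<longleftrightarrow> alternate w a b"
proof -
  have "filter (\<lambda>c. c = a \<or> c = b) (filter P w) = filter (\<lambda>c. c = a \<or> c = b) w"
    using assms by (induction w) auto
  then show ?thesis unfolding alternate_def by simp
qed

lemma count_list_filter: "P a \<Longrightarrow> count_list (filter P w) a = count_list w a"
  by (induction w) auto

lemma count_list_hd_alternating: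
  "u \<noteq> [] \<Longrightarrow> set u \<subseteq> {hd u, d} \<Longrightarrow> hd u \<noteq> d \<Longrightarrow> successively (\<noteq>) u \<Longrightarrow>
   count_list u (hd u) = count_list u d + (if last u = hd u then 1 else 0)"
proof (induction u arbitrary: d)
  case Nil then show ?case by simp
next
  case (Cons c r)
  show ?case
  proof (cases r)
    case Nil then show ?thesis using Cons.prems by simp
  next
    case (Cons e r')
    with Cons.prems have "e = d" "c \<noteq> d" "successively (\<noteq>) r" "set r \<subseteq> {hd r, c}"
      by auto
    with Cons.IH[of c] \<open>r = e # r'\<close>
    have "count_list r d = count_list r c + (if last r = d then 1 else 0)" by simp
    moreover have "last r \<in> {c, d}"
      using \<open>set r \<subseteq> {hd r, c}\<close> \<open>e = d\<close> \<open>r = e # r'\<close> last_in_set[of r] by auto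
    ultimately show ?thesis using \<open>c \<noteq> d\<close> \<open>r = e # r'\<close> by auto
  qed
qed

lemma successively_neq_if_counts_le_1:
  "set u \<subseteq> {a, b} \<Longrightarrow> count_list u a \<le> 1 \<Longrightarrow> count_list u b \<le> 1 \<Longrightarrow> successively (\<noteq>) u"
proof (induction u)
  case (Cons c r)
  then have "successively (\<noteq>) r" by (auto split: if_splits)
  moreover have "r = [] \<or> hd r \<noteq> c"
    using Cons.prems by (cases r) (auto split: if_splits)
  ultimately show ?case by (auto simp: successively_Cons)
qed simp

lemma successively_neq_replicate: "successively (\<noteq>) (replicate n a) \<Longrightarrow> n \<le> 1"
proof (induction n)
  case (Suc n) then show ?case by (cases n) auto
qed simp

section \<open>Uniform representants\<close>

lemma filter_hd_neq_if_mem_takeWhile: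
  assumes "b \<in> set (takeWhile (\<lambda>c. c \<noteq> a) w)" "Q b"
  shows "filter Q w \<noteq> [] \<and> hd (filter Q w) \<noteq> a"
proof -
  let ?t = "takeWhile (\<lambda>c. c \<noteq> a) w"
  have ne: "filter Q ?t \<noteq> []" using assms by (auto simp: filter_empty_conv)
  then have "hd (filter Q ?t) \<in> set ?t" using hd_in_set[OF ne] by auto
  then have "hd (filter Q ?t) \<noteq> a" by (metis (mono_tags, lifting) set_takeWhileD)
  moreover have "filter Q w = filter Q ?t @ filter Q (dropWhile (\<lambda>c. c \<noteq> a) w)"
    by (metis filter_append takeWhile_dropWhile_id)
  ultimately show ?thesis using ne by simp
qed

text \<open>Prepending a cannot change whether a and b alternate if b occurs before the first a, or
  if a is strictly rarer than b (then an alternating restriction cannot start with a).\<close>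

definition prependable :: "'a list \<Rightarrow> 'a \<Rightarrow> bool" where
  "prependable w a \<longleftrightarrow> (\<forall>b\<in>set w. b \<noteq> a \<longrightarrow>
     count_list w a < count_list w b \<or> b \<in> set (takeWhile (\<lambda>c. c \<noteq> a) w))"

lemma represents_Cons:
  assumes rep: "represents V E w" and aw: "a \<in> set w" and safe: "prependable w a"
  shows "represents V E (a # w)"
proof -
  have alt_a: "alternate (a # w) a b \<longleftrightarrow> alternate w a b" if b: "b \<in> set w" "b \<noteq> a" for b
  proof -
    let ?Q = "\<lambda>c. c = a \<or> c = b"
    let ?u = "filter ?Q w"
    have "?u \<noteq> [] \<and> (successively (\<noteq>) ?u \<longrightarrow> hd ?u \<noteq> a)"
    proof (cases "count_list w a < count_list w b")
      case True
      have une: "?u \<noteq> []" using b by (auto simp: filter_empty_conv)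
      moreover have "hd ?u \<noteq> a" if s: "successively (\<noteq>) ?u"
      proof
        assume h: "hd ?u = a"
        then have "set ?u \<subseteq> {hd ?u, b}" by auto
        from count_list_hd_alternating[OF une this _ s] h b(2)
        have "count_list ?u a \<ge> count_list ?u b" by simp
        then show False using True count_list_filter[of ?Q a w] count_list_filter[of ?Q b w]
          by simp
      qed
      ultimately show ?thesis by blast
    next
      case False
      then have "b \<in> set (takeWhile (\<lambda>c. c \<noteq> a) w)"
        using safe b unfolding prependable_def by blast
      from filter_hd_neq_if_mem_takeWhile[OF this, of ?Q] show ?thesis by simp
    qed
    then have "successively (\<noteq>) (a # ?u) \<longleftrightarrow> successively (\<noteq>) ?u"
      by (auto simp: successively_Cons)
    then show ?thesis using alternate_iff_successively[of a b] b(2) by simp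
  qed
  have "alternate (a # w) p q \<longleftrightarrow> alternate w p q" if "p \<in> set w" "q \<in> set w" "p \<noteq> q" for p q
  proof (cases "p = a \<or> q = a")
    case True
    then show ?thesis using alt_a that alternate_commute by metis
  next
    case False
    then have "filter (\<lambda>c. c = p \<or> c = q) (a # w) = filter (\<lambda>c. c = p \<or> c = q) w" by auto
    then show ?thesis unfolding alternate_def by simp
  qed
  moreover have "set (a # w) = set w" using aw by auto
  ultimately show ?thesis using rep unfolding represents_def by auto
qed

lemma length_takeWhile_less: "a \<in> set w \<Longrightarrow> length (takeWhile (\<lambda>c. c \<noteq> a) w) < length w"
  by (induction w) auto

lemma mem_takeWhile_if_first_index_le:
  assumes "a \<in> set w" "b \<in> set w" "a \<noteq> b"
    and le: "length (takeWhile (\<lambda>c. c \<noteq> b) w) \<le> length (takeWhile (\<lambda>c. c \<noteq> a) w)"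
  shows "b \<in> set (takeWhile (\<lambda>c. c \<noteq> a) w)"
proof -
  let ?ia = "length (takeWhile (\<lambda>c. c \<noteq> a) w)" and ?ib = "length (takeWhile (\<lambda>c. c \<noteq> b) w)"
  have "w ! ?ia = a" "w ! ?ib = b"
    using nth_length_takeWhile[OF length_takeWhile_less[OF assms(1)]]
      nth_length_takeWhile[OF length_takeWhile_less[OF assms(2)]] by simp_all
  then have "?ib < ?ia" using le assms(3) by (metis le_neq_implies_less)
  then show ?thesis using \<open>w ! ?ib = b\<close> takeWhile_nth by (metis nth_mem)
qed

text \<open>The witness is the rarest letter whose first occurrence comes last.\<close>

lemma exists_prependable_rarest_letter:
  assumes "w \<noteq> []"
  obtains a where "a \<in> set w" "count_list w a = Min (count_list w ` set w)" "prependable w a"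
proof -
  let ?mn = "Min (count_list w ` set w)"
  let ?R = "{c \<in> set w. count_list w c = ?mn}"
  let ?first = "\<lambda>c. length (takeWhile (\<lambda>d. d \<noteq> c) w)"
  have "?mn \<in> count_list w ` set w" using assms by (intro Min_in) auto
  then have "?R \<noteq> {}" by auto
  then have "Max (?first ` ?R) \<in> ?first ` ?R" by (intro Max_in) auto
  then obtain a where a: "a \<in> ?R" "?first a = Max (?first ` ?R)" by auto
  have "count_list w a < count_list w b \<or> b \<in> set (takeWhile (\<lambda>c. c \<noteq> a) w)"
    if b: "b \<in> set w" "b \<noteq> a" for b
  proof (cases "b \<in> ?R")
    case True
    then have "?first b \<le> ?first a" using a(2) by simp
    then show ?thesis using mem_takeWhile_if_first_index_le[of a w b] a(1) b by auto
  next
    case False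
    then show ?thesis using a(1) b(1) by (simp add: order_le_neq_trans)
  qed
  then show ?thesis using that a(1) unfolding prependable_def by blast
qed

lemma k_word_representable_if_counts_le:
  assumes "represents V E w" "w \<noteq> []" "\<forall>c\<in>set w. count_list w c \<le> M"
  shows "k_word_representable M V E"
  using assms
proof (induction "\<Sum>c\<in>set w. M - count_list w c" arbitrary: w rule: less_induct)
  case less
  show ?case
  proof (cases "\<forall>c\<in>set w. count_list w c = M")
    case True
    then show ?thesis using less.prems(1) unfolding k_word_representable_def uniform_word_def
      by blast
  next
    case False
    obtain a where a: "a \<in> set w" "count_list w a = Min (count_list w ` set w)" "prependable w a"
      using exists_prependable_rarest_letter[OF less.prems(2)] by blast
    have "count_list w a \<le> count_list w c" if "c \<in> set w" for c
      using a(2) that by simp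
    moreover obtain c where "c \<in> set w" "count_list w c < M"
      using False less.prems(3) by (meson order_le_neq_trans)
    ultimately have lt: "count_list w a < M" by (meson order_le_less_trans)
    then have le: "\<forall>c\<in>set (a # w). count_list (a # w) c \<le> M" using less.prems(3) by auto
    have "(\<Sum>c\<in>set w. M - count_list w c)
        = (M - count_list w a) + (\<Sum>c\<in>set w - {a}. M - count_list w c)"
      using a(1) by (simp add: sum.remove)
    moreover have "(\<Sum>c\<in>set (a # w). M - count_list (a # w) c)
        = (M - count_list (a # w) a) + (\<Sum>c\<in>set w - {a}. M - count_list w c)"
      using a(1) by (simp add: insert_absorb sum.remove, intro sum.cong) auto
    ultimately have "(\<Sum>c\<in>set (a # w). M - count_list (a # w) c)
        < (\<Sum>c\<in>set w. M - count_list w c)"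
      using lt by simp
    then show ?thesis using less.hyps represents_Cons[OF less.prems(1) a(1,3)] le by blast
  qed
qed

lemma k_word_representable_mono:
  assumes "k_word_representable k V E" "k \<le> M" "V \<noteq> {}"
  shows "k_word_representable M V E"
proof -
  obtain w where w: "uniform_word k w" "represents V E w"
    using assms(1) unfolding k_word_representable_def by blast
  then have "w \<noteq> []" using assms(3) unfolding represents_def by auto
  moreover have "\<forall>c\<in>set w. count_list w c \<le> M" using w(1) assms(2) unfolding uniform_word_def by simp
  ultimately show ?thesis using k_word_representable_if_counts_le[OF w(2)] by blast
qed

lemma word_representable_imp_k_word_representable:
  assumes "word_representable V E" "V \<noteq> {}"
  shows "\<exists>k. k_word_representable k V E"
proof -
  obtain w where w: "represents V E w" using assms(1) unfolding word_representable_def by blast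
  then have "w \<noteq> []" using assms(2) unfolding represents_def by auto
  moreover have "\<forall>c\<in>set w. count_list w c \<le> length w" by (simp add: count_le_length)
  ultimately show ?thesis using k_word_representable_if_counts_le[OF w] by blast
qed

text \<open>Balance forces an alternating two-letter word to end with the letter it does not
  start with.\<close>

lemma successively_neq_rotate1_iff:
  assumes "set (c # u) \<subseteq> {a, b}" "a \<noteq> b" "count_list (c # u) a = count_list (c # u) b"
  shows "successively (\<noteq>) (u @ [c]) \<longleftrightarrow> successively (\<noteq>) (c # u)"
proof (cases "u = []")
  case False
  obtain d where d: "{a, b} = {c, d}" "c \<noteq> d" using assms(1,2) by auto
  have bal: "count_list (c # u) c = count_list (c # u) d"
    using assms(3) d by (auto simp: doubleton_eq_iff)
  have sets: "set (c # u) \<subseteq> {c, d}" using assms(1) d by simp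
  show ?thesis
  proof
    assume s: "successively (\<noteq>) (u @ [c])"
    have "hd u \<noteq> c"
    proof
      assume "hd u = c"
      then have "hd (u @ [c]) = c" using False by simp
      then have "count_list (u @ [c]) c = count_list (u @ [c]) d + 1"
        using count_list_hd_alternating[of "u @ [c]" d] sets d(2) s by auto
      then show False using bal d(2) by simp
    qed
    then show "successively (\<noteq>) (c # u)"
      using s False by (simp add: successively_Cons successively_append_iff)
  next
    assume s: "successively (\<noteq>) (c # u)"
    have "count_list (c # u) c = count_list (c # u) d + (if last (c # u) = c then 1 else 0)"
      using count_list_hd_alternating[of "c # u" d] sets d(2) s by simp
    then have "last u \<noteq> c" using bal False by (auto split: if_splits)
    then show "successively (\<noteq>) (u @ [c])"
      using s False by (simp add: successively_Cons successively_append_iff)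
  qed
qed simp

lemma represents_rotate1:
  assumes rep: "represents V E w" and uni: "uniform_word k w"
  shows "represents V E (rotate1 w) \<and> uniform_word k (rotate1 w)"
proof (cases w)
  case (Cons c r)
  have alt: "alternate (r @ [c]) p q \<longleftrightarrow> alternate (c # r) p q"
    if "p \<in> set w" "q \<in> set w" "p \<noteq> q" for p q
  proof (cases "c = p \<or> c = q")
    case True
    let ?Q = "\<lambda>x. x = p \<or> x = q"
    have "count_list (c # filter ?Q r) s = count_list w s" if "?Q s" for s
      using that Cons True count_list_filter[of ?Q s r] by auto
    then have "count_list (c # filter ?Q r) p = count_list (c # filter ?Q r) q"
      using uni that(1,2) unfolding uniform_word_def by simp
    moreover have "set (c # filter ?Q r) \<subseteq> {p, q}" using True by auto
    ultimately show ?thesis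
      using successively_neq_rotate1_iff[OF _ that(3)] alternate_iff_successively[OF that(3)]
        True by simp
  next
    case False
    then show ?thesis unfolding alternate_def by simp
  qed
  have "count_list (rotate1 w) s = count_list w s" for s using Cons by auto
  then show ?thesis using rep uni Cons alt unfolding represents_def uniform_word_def by auto
qed (use assms in simp)

lemma represents_rotate:
  "represents V E w \<Longrightarrow> uniform_word k w \<Longrightarrow>
   represents V E (rotate n w) \<and> uniform_word k (rotate n w)"
  by (induction n) (auto dest: represents_rotate1)

lemma exists_uniform_representant_starting_with:
  assumes "represents V E w" "uniform_word k w" "v \<in> set w"
  obtains w' where "represents V E w'" "uniform_word k w'" "w' \<noteq> []" "hd w' = v"
proof -
  let ?n = "length (takeWhile (\<lambda>c. c \<noteq> v) w)"
  have "?n < length w" using assms(3) by (rule length_takeWhile_less)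
  then have "rotate ?n w = dropWhile (\<lambda>c. c \<noteq> v) w @ take ?n w"
    by (simp add: rotate_drop_take dropWhile_eq_drop)
  moreover have "dropWhile (\<lambda>c. c \<noteq> v) w \<noteq> []" using assms(3) by simp
  moreover from hd_dropWhile[OF this] have "hd (dropWhile (\<lambda>c. c \<noteq> v) w) = v" by simp
  ultimately have "rotate ?n w \<noteq> [] \<and> hd (rotate ?n w) = v" by simp
  then show ?thesis using that represents_rotate[OF assms(1,2)] by blast
qed

lemma k_word_representable_induced:
  assumes "k_word_representable k V E" "S \<subseteq> V"
    and "\<forall>a\<in>S. \<forall>b\<in>S. a \<noteq> b \<longrightarrow> ((a, b) \<in> E' \<longleftrightarrow> (a, b) \<in> E)"
  shows "k_word_representable k S E'"
proof -
  obtain w where w: "uniform_word k w" "represents V E w"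
    using assms(1) unfolding k_word_representable_def by blast
  let ?w = "filter (\<lambda>c. c \<in> S) w"
  have "alternate ?w a b \<longleftrightarrow> (a, b) \<in> E'" if "a \<in> S" "b \<in> S" "a \<noteq> b" for a b
    using w(2) assms(2,3) that alternate_filter[of "\<lambda>c. c \<in> S" a b w]
    unfolding represents_def by blast
  moreover have "set ?w = S" using w(2) assms(2) unfolding represents_def by auto
  moreover have "uniform_word k ?w"
    using w(1) count_list_filter[of "\<lambda>c. c \<in> S" _ w] unfolding uniform_word_def by auto
  ultimately show ?thesis unfolding k_word_representable_def represents_def by blast
qed

lemma k_word_representable_image:
  assumes inj: "inj_on f V" and "k_word_representable k V E"
    and edges: "\<And>a b. a \<in> V \<Longrightarrow> b \<in> V \<Longrightarrow> a \<noteq> b \<Longrightarrow> (f a, f b) \<in> E' \<longleftrightarrow> (a, b) \<in> E"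
  shows "k_word_representable k (f ` V) E'"
proof -
  obtain w where w: "uniform_word k w" "represents V E w"
    using assms(2) unfolding k_word_representable_def by blast
  have sw: "set w = V" using w(2) unfolding represents_def by simp
  have alt: "alternate (map f w) (f a) (f b) \<longleftrightarrow> alternate w a b"
    if ab: "a \<in> V" "b \<in> V" "a \<noteq> b" for a b
  proof -
    let ?u = "filter (\<lambda>c. c = a \<or> c = b) w"
    have "filter ((\<lambda>c. c = f a \<or> c = f b) \<circ> f) w = ?u"
      by (rule filter_cong) (use inj ab sw in \<open>auto simp: inj_on_eq_iff\<close>)
    then have "filter (\<lambda>c. c = f a \<or> c = f b) (map f w) = map f ?u"
      by (simp add: filter_map)
    moreover have "successively (\<lambda>x y. f x \<noteq> f y) ?u \<longleftrightarrow> successively (\<noteq>) ?u"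
      by (rule successively_cong) (use inj sw in \<open>auto simp: inj_on_eq_iff\<close>)
    moreover have "f a \<noteq> f b" using inj ab by (meson inj_on_contraD)
    ultimately show ?thesis
      by (simp add: alternate_iff_successively[OF ab(3)] successively_map
          alternate_iff_successively[OF \<open>f a \<noteq> f b\<close>])
  qed
  have "alternate (map f w) (f a) (f b) \<longleftrightarrow> (f a, f b) \<in> E'"
    if "a \<in> V" "b \<in> V" "a \<noteq> b" for a b
    using alt[OF that] edges w(2) that unfolding represents_def by auto
  then have "represents (f ` V) E' (map f w)"
    unfolding represents_def using sw by auto
  moreover have "uniform_word k (map f w)"
    using w(1) inj sw count_list_inj_map[of f w] unfolding uniform_word_def by auto
  ultimately show ?thesis unfolding k_word_representable_def by blast
qed

lemma k_word_representable_image_iff: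
  assumes inj: "inj_on f V"
    and edges: "\<And>a b. a \<in> V \<Longrightarrow> b \<in> V \<Longrightarrow> a \<noteq> b \<Longrightarrow> (f a, f b) \<in> E' \<longleftrightarrow> (a, b) \<in> E"
  shows "k_word_representable k (f ` V) E' \<longleftrightarrow> k_word_representable k V E"
proof
  assume rep: "k_word_representable k (f ` V) E'"
  have "inj_on (inv_into V f) (f ` V)" by (rule inj_on_inv_into) simp
  moreover have "(inv_into V f c, inv_into V f d) \<in> E \<longleftrightarrow> (c, d) \<in> E'"
    if "c \<in> f ` V" "d \<in> f ` V" "c \<noteq> d" for c d
    using that edges inj by (auto simp: inj_on_eq_iff)
  ultimately have "k_word_representable k (inv_into V f ` f ` V) E"
    using k_word_representable_image[OF _ rep] by blast
  then show "k_word_representable k V E" using inj by simp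
qed (rule k_word_representable_image[OF inj _ edges])

lemma k_word_representable_pos:
  assumes "k_word_representable k V E" "V \<noteq> {}"
  shows "1 \<le> k"
proof -
  obtain w where w: "uniform_word k w" "represents V E w"
    using assms(1) unfolding k_word_representable_def by blast
  then have "set w \<noteq> {}" using assms(2) unfolding represents_def by auto
  then obtain a where "a \<in> set w" by (metis ex_in_conv)
  then show ?thesis using w(1) unfolding uniform_word_def by (metis count_list_0_iff less_one not_le)
qed

lemma k_word_representable_singleton_iff: "k_word_representable k {a} E \<longleftrightarrow> 1 \<le> k"
proof
  assume "1 \<le> k"
  moreover have "count_list (replicate k a) a = k" by (induction k) auto
  ultimately have "represents {a} E (replicate k a) \<and> uniform_word k (replicate k a)"
    unfolding represents_def uniform_word_def by auto
  then show "k_word_representable k {a} E" unfolding k_word_representable_def by blast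
qed (use k_word_representable_pos[of k "{a}" E] in simp)

lemma complete_graph_if_1_word_representable:
  assumes "k_word_representable 1 V E"
  shows "complete_graph V E"
  unfolding complete_graph_def
proof (intro ballI impI)
  fix a b assume ab: "a \<in> V" "b \<in> V" "a \<noteq> b"
  obtain w where w: "uniform_word 1 w" "represents V E w"
    using assms unfolding k_word_representable_def by blast
  let ?u = "filter (\<lambda>c. c = a \<or> c = b) w"
  have "count_list ?u a \<le> 1" "count_list ?u b \<le> 1"
    using w ab count_list_filter[of "\<lambda>c. c = a \<or> c = b" a w]
      count_list_filter[of "\<lambda>c. c = a \<or> c = b" b w]
    unfolding uniform_word_def represents_def by auto
  then have "alternate w a b"
    using successively_neq_if_counts_le_1[of ?u a b] alternate_iff_successively[OF ab(3)] by auto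
  then show "(a, b) \<in> E" using w(2) ab unfolding represents_def by auto
qed

lemma rep_num_eqI:
  assumes "\<And>m. k_word_representable m V E \<longleftrightarrow> n \<le> m"
  shows "rep_num V E = n"
  unfolding rep_num_def by (rule Least_equality) (use assms in auto)

lemma k_word_representable_iff_rep_num_le:
  assumes "word_representable V E" "V \<noteq> {}"
  shows "k_word_representable m V E \<longleftrightarrow> rep_num V E \<le> m"
proof
  show "rep_num V E \<le> m" if "k_word_representable m V E"
    unfolding rep_num_def using that by (rule Least_le)
next
  obtain k where "k_word_representable k V E"
    using word_representable_imp_k_word_representable[OF assms] by blast
  then have "k_word_representable (rep_num V E) V E" unfolding rep_num_def by (rule LeastI)
  then show "k_word_representable m V E" if "rep_num V E \<le> m"
    using k_word_representable_mono that assms(2) by blast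
qed

lemma rep_num_ge_1:
  assumes "word_representable V E" "V \<noteq> {}"
  shows "1 \<le> rep_num V E"
  using k_word_representable_iff_rep_num_le[OF assms] k_word_representable_pos assms(2) by blast

lemma rep_num_singleton: "rep_num {a} E = 1"
  by (rule rep_num_eqI) (rule k_word_representable_singleton_iff)

lemma two_le_if_not_complete:
  assumes "k_word_representable m V E" "V \<noteq> {}" "\<not> complete_graph V E"
  shows "2 \<le> m"
proof -
  have "m \<noteq> 1" using complete_graph_if_1_word_representable assms(1,3) by blast
  then show ?thesis using k_word_representable_pos[OF assms(1,2)] by simp
qed

section \<open>Gluing representants at a common vertex\<close>

lemma represents_union_if_filters:
  assumes "set W = V1 \<union> V2"
    and "represents V1 E1 (filter (\<lambda>c. c \<in> V1) W)" "represents V2 E2 (filter (\<lambda>c. c \<in> V2) W)"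
    and "\<forall>a\<in>V1. \<forall>b\<in>V1. a \<noteq> b \<longrightarrow> ((a, b) \<in> E \<longleftrightarrow> (a, b) \<in> E1)"
    and "\<forall>a\<in>V2. \<forall>b\<in>V2. a \<noteq> b \<longrightarrow> ((a, b) \<in> E \<longleftrightarrow> (a, b) \<in> E2)"
    and "\<forall>a\<in>V1 - V2. \<forall>b\<in>V2 - V1. (a, b) \<notin> E \<and> (b, a) \<notin> E \<and> \<not> alternate W a b"
  shows "represents (V1 \<union> V2) E W"
  unfolding represents_def
proof (intro conjI ballI impI)
  fix p q assume p: "p \<in> V1 \<union> V2" and q: "q \<in> V1 \<union> V2" and pq: "p \<noteq> q"
  consider "p \<in> V1" "q \<in> V1" | "p \<in> V2" "q \<in> V2"
    | "p \<in> V1 - V2" "q \<in> V2 - V1" | "q \<in> V1 - V2" "p \<in> V2 - V1"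
    using p q by blast
  then show "alternate W p q \<longleftrightarrow> (p, q) \<in> E"
  proof cases
    case 1
    then show ?thesis using assms(2,4) pq alternate_filter[of "\<lambda>c. c \<in> V1" p q W]
      unfolding represents_def by auto
  next
    case 2
    then show ?thesis using assms(3,5) pq alternate_filter[of "\<lambda>c. c \<in> V2" p q W]
      unfolding represents_def by auto
  qed (use assms(6) alternate_commute in metis)+
qed (rule assms(1))

fun interleave_blocks :: "'a \<Rightarrow> 'a list list \<Rightarrow> 'a list list \<Rightarrow> 'a list" where
  "interleave_blocks v (A # As) (B # Bs) = v # A @ B @ interleave_blocks v As Bs"
| "interleave_blocks v _ _ = []"

lemma filter_interleave_blocks_left:
  assumes "length As = length Bs" "P v" "\<forall>B\<in>set Bs. \<forall>c\<in>set B. \<not> P c"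
  shows "filter P (interleave_blocks v As Bs) = concat (map (\<lambda>A. v # filter P A) As)"
  using assms by (induction As Bs rule: list_induct2) (auto simp: filter_empty_conv)

lemma filter_interleave_blocks_right:
  assumes "length As = length Bs" "P v" "\<forall>A\<in>set As. \<forall>c\<in>set A. \<not> P c"
  shows "filter P (interleave_blocks v As Bs) = concat (map (\<lambda>B. v # filter P B) Bs)"
  using assms by (induction As Bs rule: list_induct2) (auto simp: filter_empty_conv)

lemma set_interleave_blocks:
  "set (interleave_blocks v As Bs) \<subseteq> {v} \<union> \<Union>(set ` set As) \<union> \<Union>(set ` set Bs)"
  by (induction v As Bs rule: interleave_blocks.induct) auto

lemma filter_pair_eq_replicate: "b \<notin> set A \<Longrightarrow> filter (\<lambda>c. c = a \<or> c = b) A = replicate (count_list A a) a"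
  by (induction A) auto

lemma count_blocks_le_1_if_alternating:
  assumes "length As = length Bs" "\<forall>A\<in>set As. b \<notin> set A" "v \<noteq> a" "v \<noteq> b"
    and "successively (\<noteq>) (filter (\<lambda>c. c = a \<or> c = b) (interleave_blocks v As Bs))"
  shows "\<forall>A\<in>set As. count_list A a \<le> 1"
  using assms
proof (induction As Bs rule: list_induct2)
  case (Cons A As B Bs)
  let ?Q = "\<lambda>c. c = a \<or> c = b"
  have "successively (\<noteq>) (replicate (count_list A a) a @
      filter ?Q B @ filter ?Q (interleave_blocks v As Bs))"
    using Cons.prems filter_pair_eq_replicate[of b A a] by simp
  then have "successively (\<noteq>) (replicate (count_list A a) a)"
    and "successively (\<noteq>) (filter ?Q (interleave_blocks v As Bs))"
    by (simp_all only: successively_append_iff)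
  then show ?case using successively_neq_replicate Cons.IH Cons.prems by auto
qed simp

lemma count_list_concat_blocks_other:
  "a \<noteq> v \<Longrightarrow> count_list (concat (map ((#) v) As)) a = (\<Sum>A\<leftarrow>As. count_list A a)"
  by (induction As) auto

lemma count_list_concat_blocks_separator:
  "\<forall>A\<in>set As. v \<notin> set A \<Longrightarrow> count_list (concat (map ((#) v) As)) v = length As"
  by (induction As) (auto simp: count_list_0_iff)

fun glued_word :: "'a \<Rightarrow> 'a list list \<Rightarrow> 'a list list \<Rightarrow> 'a list" where
  "glued_word v (A # As) (B # Bs) = v # B @ A @ interleave_blocks v As Bs"
| "glued_word v _ _ = []"

lemma filter_glued_word_left:
  assumes "length As = length Bs" "P v" "\<forall>A\<in>set As. \<forall>c\<in>set A. P c"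
    "\<forall>B\<in>set Bs. \<forall>c\<in>set B. \<not> P c"
  shows "filter P (glued_word v As Bs) = concat (map ((#) v) As)"
proof (cases "As = []")
  case False
  then obtain A As' B Bs' where "As = A # As'" "Bs = B # Bs'"
    using assms(1) by (metis length_0_conv neq_Nil_conv)
  with assms show ?thesis
    by (auto simp: filter_interleave_blocks_left filter_empty_conv filter_True cong: map_cong)
qed (use assms(1) in simp)

lemma filter_glued_word_right:
  assumes "length As = length Bs" "P v" "\<forall>A\<in>set As. \<forall>c\<in>set A. \<not> P c"
    "\<forall>B\<in>set Bs. \<forall>c\<in>set B. P c"
  shows "filter P (glued_word v As Bs) = concat (map ((#) v) Bs)"
proof (cases "As = []")
  case False
  then obtain A As' B Bs' where "As = A # As'" "Bs = B # Bs'"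
    using assms(1) by (metis length_0_conv neq_Nil_conv)
  with assms show ?thesis
    by (auto simp: filter_interleave_blocks_right filter_empty_conv filter_True cong: map_cong)
qed (use assms(1) in simp)

lemma set_glued_word: "set (glued_word v As Bs) \<subseteq> {v} \<union> \<Union>(set ` set As) \<union> \<Union>(set ` set Bs)"
  by (cases "(v, As, Bs)" rule: glued_word.cases) (use set_interleave_blocks in fastforce)+

text \<open>The glued word starts v B1 A1 v A2 B2 v A3 B3 \<dots>: the a-run coming from A1 and A2 is
  not interrupted by any b, so if a and b alternated, a would occur at most once in A1 A2 and
  at most once in every later block, i.e. fewer than m times.\<close>

lemma not_alternate_glued_word:
  assumes len: "length As = length Bs"
    and b_notin: "\<forall>A\<in>set (A1 # A2 # As). b \<notin> set A"
    and a_notin: "\<forall>B\<in>set (B1 # B2 # Bs). a \<notin> set B"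
    and count_a: "count_list (concat (map ((#) v) (A1 # A2 # As))) a = length As + 2"
    and ab: "v \<noteq> a" "v \<noteq> b" "a \<noteq> b"
  shows "\<not> alternate (glued_word v (A1 # A2 # As) (B1 # B2 # Bs)) a b"
proof
  let ?Q = "\<lambda>c. c = a \<or> c = b"
  assume "alternate (glued_word v (A1 # A2 # As) (B1 # B2 # Bs)) a b"
  then have "successively (\<noteq>)
      (filter ?Q (glued_word v (A1 # A2 # As) (B1 # B2 # Bs)))"
    using alternate_iff_successively[OF ab(3)] by simp
  then have "successively (\<noteq>) (filter ?Q B1 @ replicate (count_list A1 a + count_list A2 a) a
      @ filter ?Q B2 @ filter ?Q (interleave_blocks v As Bs))"
    using ab b_notin filter_pair_eq_replicate[of b A1 a] filter_pair_eq_replicate[of b A2 a]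
    by (simp add: replicate_add)
  then have rep: "successively (\<noteq>) (replicate (count_list A1 a + count_list A2 a) a)"
    and rest: "successively (\<noteq>) (filter ?Q (interleave_blocks v As Bs))"
    by (simp_all only: successively_append_iff)
  have "count_list A1 a + count_list A2 a \<le> 1" using successively_neq_replicate[OF rep] .
  moreover have "\<forall>A\<in>set As. count_list A a \<le> 1"
    using count_blocks_le_1_if_alternating[OF len _ ab(1,2) rest] b_notin by auto
  then have "(\<Sum>A\<leftarrow>As. count_list A a) \<le> length As"
    using sum_list_mono[of As "\<lambda>A. count_list A a" "\<lambda>_. 1"] by (simp add: sum_list_triv)
  moreover have "count_list (concat (map ((#) v) (A1 # A2 # As))) a
      = count_list A1 a + count_list A2 a + (\<Sum>A\<leftarrow>As. count_list A a)"
    using count_list_concat_blocks_other[of a v] ab(1) by auto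
  ultimately show False using count_a by simp
qed

lemma exists_blocks_decomposition:
  "\<exists>A0 As. w = A0 @ concat (map ((#) v) As) \<and> v \<notin> set A0 \<and> (\<forall>A\<in>set As. v \<notin> set A)"
proof (induction w)
  case Nil
  have "[] = [] @ concat (map ((#) v) [])" by simp
  then show ?case by fastforce
next
  case (Cons c w)
  then obtain A0 As where IH: "w = A0 @ concat (map ((#) v) As)" "v \<notin> set A0"
    "\<forall>A\<in>set As. v \<notin> set A" by blast
  show ?case
  proof (cases "c = v")
    case True
    then have "c # w = [] @ concat (map ((#) v) (A0 # As))" using IH(1) by simp
    then show ?thesis using IH(2,3) by (metis empty_iff empty_set set_ConsD)
  next
    case False
    then have "c # w = (c # A0) @ concat (map ((#) v) As)" using IH(1) by simp
    then show ?thesis using IH(2,3) False by (metis set_ConsD)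
  qed
qed

lemma exists_blocks_decomposition_hd:
  assumes "w \<noteq> []" "hd w = v"
  obtains As where "w = concat (map ((#) v) As)" "\<forall>A\<in>set As. v \<notin> set A"
proof -
  obtain A0 As where As: "w = A0 @ concat (map ((#) v) As)" "v \<notin> set A0"
    "\<forall>A\<in>set As. v \<notin> set A"
    using exists_blocks_decomposition[of w v] by blast
  have "A0 = []"
  proof (rule ccontr)
    assume "A0 \<noteq> []"
    then have "hd w \<in> set A0" using As(1) by simp
    then show False using As(2) assms(2) by simp
  qed
  then show ?thesis using that As by simp
qed

lemma exists_uniform_representant_blocks:
  assumes "k_word_representable m V E" "v \<in> V"
  obtains w As where "represents V E w" "uniform_word m w" "w = concat (map ((#) v) As)"
    "length As = m" "\<forall>A\<in>set As. set A \<subseteq> V - {v}"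
proof -
  obtain w0 where w0: "uniform_word m w0" "represents V E w0"
    using assms(1) unfolding k_word_representable_def by blast
  moreover have "v \<in> set w0" using w0(2) assms(2) unfolding represents_def by auto
  ultimately obtain w where w: "represents V E w" "uniform_word m w" "w \<noteq> []" "hd w = v"
    using exists_uniform_representant_starting_with[OF w0(2,1)] by blast
  then obtain As where As: "w = concat (map ((#) v) As)" "\<forall>A\<in>set As. v \<notin> set A"
    using exists_blocks_decomposition_hd[OF w(3,4)] by blast
  have "set w = V" using w(1) unfolding represents_def by simp
  then have "length As = m"
    using count_list_concat_blocks_separator[OF As(2)] As(1) w(2) assms(2)
    unfolding uniform_word_def by simp
  moreover have "\<forall>A\<in>set As. set A \<subseteq> V - {v}" using As \<open>set w = V\<close> by auto
  ultimately show thesis using that w(1,2) As(1) by blast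
qed

lemma uniform_word_if_filters:
  assumes "set W \<subseteq> V1 \<union> V2"
    and "uniform_word m (filter (\<lambda>c. c \<in> V1) W)" "uniform_word m (filter (\<lambda>c. c \<in> V2) W)"
  shows "uniform_word m W"
  unfolding uniform_word_def
proof
  fix c assume "c \<in> set W"
  then consider "c \<in> V1" | "c \<in> V2" using assms(1) by blast
  then show "count_list W c = m"
    using assms(2,3) \<open>c \<in> set W\<close> count_list_filter[of "\<lambda>c. c \<in> V1" c W]
      count_list_filter[of "\<lambda>c. c \<in> V2" c W]
    unfolding uniform_word_def by (cases) auto
qed

lemma k_word_representable_glue:
  assumes rep1: "k_word_representable m V1 E1" and rep2: "k_word_representable m V2 E2"
    and m: "2 \<le> m" and int: "V1 \<inter> V2 = {v}"
    and agree1: "\<forall>a\<in>V1. \<forall>b\<in>V1. a \<noteq> b \<longrightarrow> ((a, b) \<in> E \<longleftrightarrow> (a, b) \<in> E1)"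
    and agree2: "\<forall>a\<in>V2. \<forall>b\<in>V2. a \<noteq> b \<longrightarrow> ((a, b) \<in> E \<longleftrightarrow> (a, b) \<in> E2)"
    and cross: "\<forall>a\<in>V1 - {v}. \<forall>b\<in>V2 - {v}. (a, b) \<notin> E \<and> (b, a) \<notin> E"
  shows "k_word_representable m (V1 \<union> V2) E"
proof -
  have v: "v \<in> V1" "v \<in> V2" and diff: "V1 - {v} = V1 - V2" "V2 - {v} = V2 - V1"
    using int by auto
  obtain x1 As where x1: "represents V1 E1 x1" "uniform_word m x1"
    and As: "x1 = concat (map ((#) v) As)" "length As = m" "\<forall>A\<in>set As. set A \<subseteq> V1 - V2"
    using exists_uniform_representant_blocks[OF rep1 v(1)] diff by metis
  obtain x2 Bs where x2: "represents V2 E2 x2" "uniform_word m x2"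
    and Bs: "x2 = concat (map ((#) v) Bs)" "length Bs = m" "\<forall>B\<in>set Bs. set B \<subseteq> V2 - V1"
    using exists_uniform_representant_blocks[OF rep2 v(2)] diff by metis
  obtain A1 A2 As' B1 B2 Bs' where AB: "As = A1 # A2 # As'" "Bs = B1 # B2 # Bs'"
    using As(2) Bs(2) m by (metis Suc_le_length_iff numeral_2_eq_2)
  have len: "length As = length Bs" "length As' = length Bs'" "length As' + 2 = m"
    using As(2) Bs(2) AB by auto
  define W where "W = glued_word v As Bs"
  have filters: "filter (\<lambda>c. c \<in> V1) W = x1" "filter (\<lambda>c. c \<in> V2) W = x2"
    unfolding W_def As(1) Bs(1)
    by (rule filter_glued_word_left[OF len(1)] filter_glued_word_right[OF len(1)];
        use As(3) Bs(3) v in auto)+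
  have "set W \<subseteq> V1 \<union> V2" unfolding W_def using set_glued_word[of v As Bs] As(3) Bs(3) v by auto
  moreover have "V1 \<union> V2 \<subseteq> set W"
    using filter_is_subset[of "\<lambda>c. c \<in> V1" W] filter_is_subset[of "\<lambda>c. c \<in> V2" W]
      filters x1(1) x2(1) unfolding represents_def by simp
  ultimately have set_W: "set W = V1 \<union> V2" by blast
  have "\<not> alternate W a b" if ab: "a \<in> V1 - V2" "b \<in> V2 - V1" for a b
    unfolding W_def AB
  proof (rule not_alternate_glued_word[OF len(2)])
    have "count_list x1 a = m" using x1 ab unfolding uniform_word_def represents_def by simp
    then show "count_list (concat (map ((#) v) (A1 # A2 # As'))) a = length As' + 2"
      using As(1) AB(1) len(3) by simp
    show "\<forall>A\<in>set (A1 # A2 # As'). b \<notin> set A" using As(3) AB(1) ab by blast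
    show "\<forall>B\<in>set (B1 # B2 # Bs'). a \<notin> set B" using Bs(3) AB(2) ab by blast
    show "v \<noteq> a" "v \<noteq> b" "a \<noteq> b" using ab v by auto
  qed
  then have "represents (V1 \<union> V2) E W"
    using represents_union_if_filters[OF set_W] filters x1(1) x2(1) agree1 agree2 cross diff
    by simp
  moreover have "uniform_word m W"
    using uniform_word_if_filters[OF \<open>set W \<subseteq> V1 \<union> V2\<close>] filters x1(2) x2(2) by simp
  ultimately show ?thesis unfolding k_word_representable_def by blast
qed

section \<open>Joining two graphs by an edge or by identifying two vertices\<close>

lemma merge_vx_commute: "merge_vx x y z = merge_vx y x z"
  unfolding merge_vx_def by auto

lemma ident_V_commute: "ident_V V1 V2 x y z = ident_V V2 V1 y x z"
  unfolding ident_V_def by auto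

lemma ident_E_commute: "ident_E E1 E2 x y z = ident_E E2 E1 y x z"
  unfolding ident_E_def merge_vx_commute[of x y] by (simp add: Un_commute)

lemma bridge_V_commute: "bridge_V V1 V2 = bridge_V V2 V1"
  unfolding bridge_V_def by auto

lemma bridge_E_commute: "bridge_E E1 E2 x y = bridge_E E2 E1 y x"
  unfolding bridge_E_def by auto

locale graph_pair =
  fixes V1 V2 :: "'a set" and E1 E2 :: "('a \<times> 'a) set" and x y z :: 'a
  assumes simple1: "simple_graph V1 E1" and simple2: "simple_graph V2 E2"
    and disjoint: "V1 \<inter> V2 = {}" and x: "x \<in> V1" and y: "y \<in> V2"
    and z: "z \<notin> (V1 - {x}) \<union> (V2 - {y})"
begin

text \<open>Facts are proved for the side of V1 and transferred to V2 through graph_pair_swap; this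
  is why V2 is mapped by merge_vx y x z, which equals merge_vx x y z.\<close>

lemma graph_pair_swap: "graph_pair V2 V1 E2 E1 y x z"
  using simple1 simple2 disjoint x y z by unfold_locales auto

lemma edges_subset: "E1 \<subseteq> V1 \<times> V1" "E2 \<subseteq> V2 \<times> V2"
  using simple1 simple2 unfolding simple_graph_def by simp_all

lemma card_eq_1_iff: "card V1 = 1 \<longleftrightarrow> V1 = {x}" and card_ge_1: "1 \<le> card V1"
proof -
  have "finite V1" using simple1 unfolding simple_graph_def by simp
  then show "card V1 = 1 \<longleftrightarrow> V1 = {x}" "1 \<le> card V1"
    using x card_1_singleton_iff[of V1] card_gt_0_iff[of V1] by auto
qed

lemma inj_on_merge: "inj_on (merge_vx x y z) V1"
  using z disjoint y unfolding inj_on_def merge_vx_def by auto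

lemma merge_image: "merge_vx x y z ` V1 = V1 - {x} \<union> {z}"
  using x y disjoint unfolding merge_vx_def by auto

lemma ident_V_eq: "ident_V V1 V2 x y z = merge_vx x y z ` V1 \<union> merge_vx y x z ` V2"
  using merge_image graph_pair.merge_image[OF graph_pair_swap] unfolding ident_V_def by auto

lemma merge_images_inter: "merge_vx x y z ` V1 \<inter> merge_vx y x z ` V2 = {z}"
  using merge_image graph_pair.merge_image[OF graph_pair_swap] disjoint z by auto

lemma ident_E_on_merge_image:
  assumes "a \<in> V1" "b \<in> V1" "a \<noteq> b"
  shows "(merge_vx x y z a, merge_vx x y z b) \<in> ident_E E1 E2 x y z \<longleftrightarrow> (a, b) \<in> E1"
proof
  let ?f = "merge_vx x y z"
  assume "(?f a, ?f b) \<in> ident_E E1 E2 x y z"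
  then obtain c d where cd: "(c, d) \<in> E1 \<union> E2" "?f a = ?f c" "?f b = ?f d"
    unfolding ident_E_def by auto
  show "(a, b) \<in> E1"
  proof (cases "(c, d) \<in> E1")
    case True
    then have "c = a" "d = b" using cd edges_subset assms inj_on_merge by (auto dest: inj_onD)
    then show ?thesis using True by simp
  next
    case False
    then have "c \<in> V2" "d \<in> V2" using cd edges_subset by auto
    then have "?f a \<in> merge_vx y x z ` V2" "?f b \<in> merge_vx y x z ` V2"
      using cd merge_vx_commute[of x y] by auto
    moreover have "?f a \<in> ?f ` V1" "?f b \<in> ?f ` V1" using assms by auto
    ultimately have "?f a = z" "?f b = z" using merge_images_inter by blast+
    then have "?f a = ?f b" by simp
    then show ?thesis using assms inj_on_merge by (auto dest: inj_onD)
  qed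
next
  assume "(a, b) \<in> E1"
  then show "(merge_vx x y z a, merge_vx x y z b) \<in> ident_E E1 E2 x y z"
    unfolding ident_E_def by (intro rev_image_eqI[of "(a, b)"]) simp_all
qed

lemma ident_E_across:
  assumes "p \<in> V1 - {x}" "q \<in> V2 - {y}"
  shows "(p, q) \<notin> ident_E E1 E2 x y z"
proof
  assume "(p, q) \<in> ident_E E1 E2 x y z"
  then obtain a b where ab: "(a, b) \<in> E1 \<union> E2" "p = merge_vx x y z a" "q = merge_vx x y z b"
    unfolding ident_E_def by auto
  have "p \<notin> V2" "p \<noteq> z" "q \<notin> V1" "q \<noteq> z" using assms disjoint z by auto
  show False
  proof (cases "(a, b) \<in> E1")
    case True
    then have "b \<in> V1" using edges_subset by auto
    then have "q \<in> merge_vx x y z ` V1" using ab(3) by simp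
    then show False using merge_image \<open>q \<notin> V1\<close> \<open>q \<noteq> z\<close> by simp
  next
    case False
    then have "a \<in> V2" using ab(1) edges_subset by auto
    then have "p \<in> merge_vx y x z ` V2" using ab(2) merge_vx_commute[of x y] by simp
    then show False
      using graph_pair.merge_image[OF graph_pair_swap] \<open>p \<notin> V2\<close> \<open>p \<noteq> z\<close> by simp
  qed
qed

lemma ident_E_across_sym:
  assumes "p \<in> V1 - {x}" "q \<in> V2 - {y}"
  shows "(q, p) \<notin> ident_E E1 E2 x y z"
  using graph_pair.ident_E_across[OF graph_pair_swap] assms ident_E_commute by metis

lemma k_word_representable_merge_image_iff:
  "k_word_representable m (merge_vx x y z ` V1) (ident_E E1 E2 x y z)
    \<longleftrightarrow> k_word_representable m V1 E1"
  using k_word_representable_image_iff[OF inj_on_merge] ident_E_on_merge_image by blast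

lemma k_word_representable_ident_imp:
  assumes "k_word_representable m (ident_V V1 V2 x y z) (ident_E E1 E2 x y z)"
  shows "k_word_representable m V1 E1"
proof -
  have "k_word_representable m (merge_vx x y z ` V1) (ident_E E1 E2 x y z)"
    using assms by (rule k_word_representable_induced) (auto simp: ident_V_eq)
  then show ?thesis using k_word_representable_merge_image_iff by blast
qed

lemma k_word_representable_ident:
  assumes "k_word_representable m V1 E1" "k_word_representable m V2 E2" "2 \<le> m"
  shows "k_word_representable m (ident_V V1 V2 x y z) (ident_E E1 E2 x y z)"
proof -
  have "k_word_representable m (merge_vx y x z ` V2) (ident_E E1 E2 x y z)"
    using graph_pair.k_word_representable_merge_image_iff[OF graph_pair_swap] assms(2) ident_E_commute by metis
  moreover have "merge_vx x y z ` V1 - {z} = V1 - {x}" "merge_vx y x z ` V2 - {z} = V2 - {y}"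
    using merge_image graph_pair.merge_image[OF graph_pair_swap] z by auto
  ultimately show ?thesis
    unfolding ident_V_eq
    using k_word_representable_glue[OF k_word_representable_merge_image_iff[THEN iffD2, OF assms(1)] _ assms(3)
        merge_images_inter] ident_E_across ident_E_across_sym by simp
qed

lemma k_word_representable_ident_singleton_iff:
  assumes "V1 = {x}"
  shows "k_word_representable m (ident_V V1 V2 x y z) (ident_E E1 E2 x y z)
    \<longleftrightarrow> k_word_representable m V2 E2"
proof -
  have "ident_V V1 V2 x y z = merge_vx y x z ` V2"
    using ident_V_eq merge_image assms graph_pair.merge_image[OF graph_pair_swap] by auto
  then show ?thesis
    using k_word_representable_image_iff[OF graph_pair.inj_on_merge[OF graph_pair_swap]
        graph_pair.ident_E_on_merge_image[OF graph_pair_swap]] ident_E_commute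
    by metis
qed

lemma not_complete_ident:
  assumes "V1 \<noteq> {x}" "V2 \<noteq> {y}"
  shows "\<not> complete_graph (ident_V V1 V2 x y z) (ident_E E1 E2 x y z)"
proof -
  obtain a b where "a \<in> V1 - {x}" "b \<in> V2 - {y}" using assms x y by blast
  moreover from this have "a \<noteq> b" using disjoint by blast
  ultimately show ?thesis
    using ident_E_across unfolding complete_graph_def ident_V_def by blast
qed

lemma bridge_E_on_V1: "a \<in> V1 \<Longrightarrow> b \<in> V1 \<Longrightarrow> (a, b) \<in> bridge_E E1 E2 x y \<longleftrightarrow> (a, b) \<in> E1"
  using edges_subset disjoint y unfolding bridge_E_def by auto

lemma bridge_E_across:
  assumes "a \<in> V1" "b \<in> V2" "(a, b) \<noteq> (x, y)"
  shows "(a, b) \<notin> bridge_E E1 E2 x y" "(b, a) \<notin> bridge_E E1 E2 x y"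
  using assms x y edges_subset disjoint unfolding bridge_E_def by auto

lemma k_word_representable_bridge_imp:
  "k_word_representable m (bridge_V V1 V2) (bridge_E E1 E2 x y) \<Longrightarrow> k_word_representable m V1 E1"
  by (rule k_word_representable_induced) (auto simp: bridge_V_def bridge_E_on_V1)

lemma k_word_representable_edge:
  assumes "1 \<le> m"
  shows "k_word_representable m {x, y} (bridge_E E1 E2 x y)"
proof (rule k_word_representable_mono[OF _ assms])
  have "x \<noteq> y" using x y disjoint by blast
  then have "alternate [x, y] x y" "alternate [x, y] y x"
    using alternate_iff_successively[of x y] alternate_iff_successively[of y x] by auto
  then have "represents {x, y} (bridge_E E1 E2 x y) [x, y]"
    unfolding represents_def bridge_E_def by auto
  moreover have "uniform_word 1 [x, y]" using \<open>x \<noteq> y\<close> unfolding uniform_word_def by simp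
  ultimately show "k_word_representable 1 {x, y} (bridge_E E1 E2 x y)"
    unfolding k_word_representable_def by blast
qed simp

lemma k_word_representable_bridge:
  assumes "k_word_representable m V1 E1" "k_word_representable m V2 E2" "2 \<le> m"
  shows "k_word_representable m (bridge_V V1 V2) (bridge_E E1 E2 x y)"
proof -
  let ?E = "bridge_E E1 E2 x y"
  have rep1: "k_word_representable m V1 ?E"
    by (rule k_word_representable_induced[OF assms(1) subset_refl]) (simp add: bridge_E_on_V1)
  have "(a, b) \<in> ?E \<longleftrightarrow> (a, b) \<in> E2" if "a \<in> V2" "b \<in> V2" for a b
    using graph_pair.bridge_E_on_V1[OF graph_pair_swap that] bridge_E_commute[of E1 E2 x y] by simp
  then have rep2: "k_word_representable m V2 ?E"
    by (intro k_word_representable_induced[OF assms(2) subset_refl]) blast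
  have edge: "k_word_representable m {x, y} ?E"
    using assms(3) by (simp add: k_word_representable_edge)
  have "x \<noteq> y" "y \<notin> V1" "x \<notin> V2" using x y disjoint by auto
  have "k_word_representable m (V1 \<union> {x, y}) ?E"
  proof (rule k_word_representable_glue[OF rep1 edge assms(3)])
    show "V1 \<inter> {x, y} = {x}" using x \<open>y \<notin> V1\<close> by blast
    show "\<forall>a\<in>V1 - {x}. \<forall>b\<in>{x, y} - {x}. (a, b) \<notin> ?E \<and> (b, a) \<notin> ?E"
    proof (intro ballI)
      fix a b assume "a \<in> V1 - {x}" "b \<in> {x, y} - {x}"
      then show "(a, b) \<notin> ?E \<and> (b, a) \<notin> ?E" using bridge_E_across[of a y] y by auto
    qed
  qed simp_all
  then have "k_word_representable m ((V1 \<union> {x, y}) \<union> V2) ?E"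
  proof (rule k_word_representable_glue[OF _ rep2 assms(3)])
    show "(V1 \<union> {x, y}) \<inter> V2 = {y}" using y disjoint \<open>x \<notin> V2\<close> by blast
    show "\<forall>a\<in>(V1 \<union> {x, y}) - {y}. \<forall>b\<in>V2 - {y}. (a, b) \<notin> ?E \<and> (b, a) \<notin> ?E"
    proof (intro ballI)
      fix a b assume "a \<in> (V1 \<union> {x, y}) - {y}" "b \<in> V2 - {y}"
      then show "(a, b) \<notin> ?E \<and> (b, a) \<notin> ?E" using bridge_E_across[of a b] x by auto
    qed
  qed simp_all
  moreover have "(V1 \<union> {x, y}) \<union> V2 = bridge_V V1 V2" using x y unfolding bridge_V_def by auto
  ultimately show ?thesis by simp
qed

lemma not_complete_bridge:
  assumes "V1 \<noteq> {x}"
  shows "\<not> complete_graph (bridge_V V1 V2) (bridge_E E1 E2 x y)"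
proof -
  obtain a where "a \<in> V1" "a \<noteq> x" using assms x by blast
  moreover from this have "a \<noteq> y" using y disjoint by blast
  ultimately show ?thesis
    using bridge_E_across(1)[of a y] y unfolding complete_graph_def bridge_V_def by blast
qed

end

locale representable_graph_pair = graph_pair +
  assumes representable1: "word_representable V1 E1"
    and representable2: "word_representable V2 E2"
begin

lemma representable_graph_pair_swap: "representable_graph_pair V2 V1 E2 E1 y x z"
  using graph_pair_swap representable1 representable2
  by (simp add: representable_graph_pair_def representable_graph_pair_axioms_def)

lemma k_word_representable_iff:
  "k_word_representable m V1 E1 \<longleftrightarrow> rep_num V1 E1 \<le> m"
  "k_word_representable m V2 E2 \<longleftrightarrow> rep_num V2 E2 \<le> m"
  using k_word_representable_iff_rep_num_le representable1 representable2 x y by blast+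

lemma rep_num_bridge:
  assumes "V1 \<noteq> {x} \<or> V2 \<noteq> {y}"
  shows "rep_num (bridge_V V1 V2) (bridge_E E1 E2 x y) = max (max (rep_num V1 E1) (rep_num V2 E2)) 2"
proof (rule rep_num_eqI)
  fix m
  have "\<not> complete_graph (bridge_V V1 V2) (bridge_E E1 E2 x y)"
    using assms not_complete_bridge graph_pair.not_complete_bridge[OF graph_pair_swap]
      bridge_V_commute[of V1 V2] bridge_E_commute[of E1 E2 x y] by metis
  moreover have "bridge_V V1 V2 \<noteq> {}" using x unfolding bridge_V_def by blast
  moreover have "k_word_representable m (bridge_V V1 V2) (bridge_E E1 E2 x y)
      \<Longrightarrow> k_word_representable m V2 E2"
    using graph_pair.k_word_representable_bridge_imp[OF graph_pair_swap]
      bridge_V_commute[of V1 V2] bridge_E_commute[of E1 E2 x y] by metis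
  ultimately show "k_word_representable m (bridge_V V1 V2) (bridge_E E1 E2 x y)
      \<longleftrightarrow> max (max (rep_num V1 E1) (rep_num V2 E2)) 2 \<le> m"
    using k_word_representable_bridge k_word_representable_bridge_imp k_word_representable_iff
      two_le_if_not_complete[of m "bridge_V V1 V2"] by (metis max.bounded_iff)
qed

lemma rep_num_ident:
  assumes "V1 \<noteq> {x}" "V2 \<noteq> {y}"
  shows "rep_num (ident_V V1 V2 x y z) (ident_E E1 E2 x y z)
    = max (max (rep_num V1 E1) (rep_num V2 E2)) 2"
proof (rule rep_num_eqI)
  fix m
  have "ident_V V1 V2 x y z \<noteq> {}" unfolding ident_V_def by blast
  moreover have "k_word_representable m (ident_V V1 V2 x y z) (ident_E E1 E2 x y z)
      \<Longrightarrow> k_word_representable m V2 E2"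
    using graph_pair.k_word_representable_ident_imp[OF graph_pair_swap]
      ident_V_commute[of V1 V2] ident_E_commute[of E1 E2 x y] by metis
  ultimately show "k_word_representable m (ident_V V1 V2 x y z) (ident_E E1 E2 x y z)
      \<longleftrightarrow> max (max (rep_num V1 E1) (rep_num V2 E2)) 2 \<le> m"
    using k_word_representable_ident k_word_representable_ident_imp k_word_representable_iff
      two_le_if_not_complete[of m "ident_V V1 V2 x y z"] not_complete_ident[OF assms]
    by (metis max.bounded_iff)
qed

lemma rep_num_ident_singleton:
  assumes "V1 = {x}"
  shows "rep_num (ident_V V1 V2 x y z) (ident_E E1 E2 x y z) = max (rep_num V1 E1) (rep_num V2 E2)"
proof -
  have "1 \<le> rep_num V2 E2" using rep_num_ge_1[OF representable2] y by blast
  then have "rep_num V1 E1 \<le> rep_num V2 E2" using assms by (simp add: rep_num_singleton)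
  then show ?thesis
    using k_word_representable_ident_singleton_iff[OF assms] k_word_representable_iff
    by (auto intro: rep_num_eqI)
qed

lemma rep_num_ident_some_singleton:
  assumes "V1 = {x} \<or> V2 = {y}"
  shows "rep_num (ident_V V1 V2 x y z) (ident_E E1 E2 x y z) = max (rep_num V1 E1) (rep_num V2 E2)"
  using assms rep_num_ident_singleton
    representable_graph_pair.rep_num_ident_singleton[OF representable_graph_pair_swap]
    ident_V_commute[of V1] ident_E_commute[of E1] max.commute by metis

lemma rep_num_singletons:
  assumes "V1 = {x}" "V2 = {y}"
  shows "rep_num (bridge_V V1 V2) (bridge_E E1 E2 x y) = 1"
    "rep_num (ident_V V1 V2 x y z) (ident_E E1 E2 x y z) = 1"
proof -
  have "bridge_V V1 V2 = {x, y}" using assms unfolding bridge_V_def by auto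
  then show "rep_num (bridge_V V1 V2) (bridge_E E1 E2 x y) = 1"
    using k_word_representable_edge k_word_representable_pos[of _ "{x, y}"]
    by (auto intro: rep_num_eqI)
  have "ident_V V1 V2 x y z = {z}" using assms unfolding ident_V_def by simp
  then show "rep_num (ident_V V1 V2 x y z) (ident_E E1 E2 x y z) = 1"
    by (simp add: rep_num_singleton)
qed

lemma complete_singletons:
  assumes "V1 = {x}" "V2 = {y}"
  shows "complete_graph (bridge_V V1 V2) (bridge_E E1 E2 x y)"
    "complete_graph (ident_V V1 V2 x y z) (ident_E E1 E2 x y z)"
  using assms unfolding complete_graph_def bridge_V_def bridge_E_def ident_V_def by auto

end

theorem theorem16:
  fixes V1 V2 :: "'a set" and E1 E2 :: "('a \<times> 'a) set" and x y z :: 'a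
    and k1 k2 k :: nat
  assumes "simple_graph V1 E1" and "simple_graph V2 E2"
    and "word_representable V1 E1" and "word_representable V2 E2"
    and "V1 \<inter> V2 = {}"
    and "rep_num V1 E1 = k1" and "rep_num V2 E2 = k2"
    and "x \<in> V1" and "y \<in> V2"
    and "z \<notin> (V1 - {x}) \<union> (V2 - {y})"
    and "k = max k1 k2"
  shows
    "(card V1 = 1 \<and> card V2 = 1 \<longrightarrow>
        complete_graph (bridge_V V1 V2) (bridge_E E1 E2 x y) \<and>
        complete_graph (ident_V V1 V2 x y z) (ident_E E1 E2 x y z) \<and>
        k1 = 1 \<and> k2 = 1 \<and>
        rep_num (bridge_V V1 V2) (bridge_E E1 E2 x y) = 1 \<and>
        rep_num (ident_V V1 V2 x y z) (ident_E E1 E2 x y z) = 1) \<and>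
     (min (card V1) (card V2) = 1 \<and> max (card V1) (card V2) > 1 \<longrightarrow>
        rep_num (ident_V V1 V2 x y z) (ident_E E1 E2 x y z) = k \<and>
        rep_num (bridge_V V1 V2) (bridge_E E1 E2 x y) = max k 2) \<and>
     (min (card V1) (card V2) > 1 \<longrightarrow>
        rep_num (bridge_V V1 V2) (bridge_E E1 E2 x y) = max k 2 \<and>
        rep_num (ident_V V1 V2 x y z) (ident_E E1 E2 x y z) = max k 2)"
proof -
  interpret representable_graph_pair V1 V2 E1 E2 x y z
    using assms by unfold_locales
  let ?G' = "rep_num (bridge_V V1 V2) (bridge_E E1 E2 x y)"
    and ?G'' = "rep_num (ident_V V1 V2 x y z) (ident_E E1 E2 x y z)"
  have singletons: "complete_graph (bridge_V V1 V2) (bridge_E E1 E2 x y) \<and>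
      complete_graph (ident_V V1 V2 x y z) (ident_E E1 E2 x y z) \<and>
      k1 = 1 \<and> k2 = 1 \<and> ?G' = 1 \<and> ?G'' = 1" if "V1 = {x}" "V2 = {y}"
    using complete_singletons[OF that] rep_num_singletons[OF that] assms(6,7) that
    by (simp add: rep_num_singleton)
  have one_singleton: "?G'' = k \<and> ?G' = max k 2" if "(V1 = {x}) \<noteq> (V2 = {y})"
    using rep_num_ident_some_singleton rep_num_bridge that assms(6,7,11) by auto
  have no_singleton: "?G' = max k 2 \<and> ?G'' = max k 2" if "V1 \<noteq> {x}" "V2 \<noteq> {y}"
    using rep_num_bridge rep_num_ident that assms(6,7,11) by simp
  have "card V1 = 1 \<and> card V2 = 1 \<longleftrightarrow> V1 = {x} \<and> V2 = {y}"
    and "min (card V1) (card V2) = 1 \<and> max (card V1) (card V2) > 1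
      \<longleftrightarrow> (V1 = {x}) \<noteq> (V2 = {y})"
    and "min (card V1) (card V2) > 1 \<longleftrightarrow> V1 \<noteq> {x} \<and> V2 \<noteq> {y}"
    using card_eq_1_iff graph_pair.card_eq_1_iff[OF graph_pair_swap]
      card_ge_1 graph_pair.card_ge_1[OF graph_pair_swap] by linarith+
  then show ?thesis using singletons one_singleton no_singleton by presburger
qed

end
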